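(* Let $\mathcal S$ be a split system on $X$ that is circular with respect to a circular ordering $\pi_1$ of $X$, and let $\pi_2$ be another circular ordering of $X$. Then $\mathcal S$ is circular with respect to $\pi_2$ if and only if $\pi_2$ can be obtained from $\pi_1$ by a finite sequence of twists, each of which is admissible for $\mathcal S$ with respect to the ordering current at that step.
   Context: $X$ is a finite set of $n\ge 4$ labels. A split of $X$ is an unordered partition $\{A,B\}$ of $X$ into two nonempty sets; a split system is a set of splits. Two splits $\{A_1,B_1\}$, $\{A_2,B_2\}$ are compatible if at least one of $A_1\cap A_2$, $A_1\cap B_2$, $B_1\cap A_2$, $B_1\cap B_2$ is empty. A circular ordering of $X$ is a cyclic arrangement $\pi=(x_1,\dots,x_n)$ of the elements of $X$, considered up to rotation and reflection. A split is circular with respect to $\pi$ if it is of the form $\{\{x_{i+1},\dots,x_j\},\,X\setminus\{x_{i+1},\dots,x_j\}\}$ (indices mod $n$); a split system is circular with respect to $\pi$ if all its splits are. (Geometrically: label the edges of a regular $n$-gon cyclically by $x_1,\dots,x_n$; nontrivial splits circular w.r.t. $\pi$ are the diagonals, a diagonal separating the edge labels into the two parts; two such diagonals cross iff the splits are incompatible.) For a set $I=\{x_{i+1},\dots,x_j\}$ of cyclically consecutive elements of $\pi$ with $2\le |I|\le n-2$, the twist of $\pi$ along $I$ is the circular ordering $(x_1,\dots,x_i,x_j,x_{j-1},\dots,x_{i+1},x_{j+1},\dots,x_n)$ obtained by reversing the block $I$ (geometrically: cut the labeled polygon along the diagonal of $\{I,X\setminus I\}$, reflect one piece and reglue). Such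 a twist is admissible for a split system $\mathcal S$ circular w.r.t. $\pi$ if the split $\{I,X\setminus I\}$ (which may or may not belong to $\mathcal S$) is compatible with every split of $\mathcal S$, i.e. its diagonal crosses no diagonal representing $\mathcal S$. *)

theory Defs
  imports Main
begin

definition is_split :: "'a set \<Rightarrow> 'a set set \<Rightarrow> bool" where
  "is_split X s \<longleftrightarrow> (\<exists>A. A \<noteq> {} \<and> A \<subseteq> X \<and> A \<noteq> X \<and> s = {A, X - A})"

definition split_system :: "'a set \<Rightarrow> 'a set set set \<Rightarrow> bool" where
  "split_system X S \<longleftrightarrow> (\<forall>s\<in>S. is_split X s)"

definition compatible :: "'a set set \<Rightarrow> 'a set set \<Rightarrow> bool" where
  "compatible s1 s2 \<longleftrightarrow> (\<exists>A1\<in>s1. \<exists>A2\<in>s2. A1 \<inter> A2 = {})"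

text \<open>A circular ordering of X is represented by a list enumerating X without repetitions,
  read cyclically; two lists represent the same circular ordering iff they agree up to
  rotation and reflection.\<close>
definition circ_ordering :: "'a set \<Rightarrow> 'a list \<Rightarrow> bool" where
  "circ_ordering X xs \<longleftrightarrow> distinct xs \<and> set xs = X"

definition circ_equiv :: "'a list \<Rightarrow> 'a list \<Rightarrow> bool" where
  "circ_equiv xs ys \<longleftrightarrow> (\<exists>k. ys = rotate k xs \<or> ys = rotate k (rev xs))"

definition cyc_interval :: "'a list \<Rightarrow> nat \<Rightarrow> nat \<Rightarrow> 'a set" where
  "cyc_interval xs k m = set (take m (rotate k xs))"

definition circular_split :: "'a set \<Rightarrow> 'a list \<Rightarrow> 'a set set \<Rightarrow> bool" where
  "circular_split X xs s \<longleftrightarrow>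
     is_split X s \<and> (\<exists>k m. s = {cyc_interval xs k m, X - cyc_interval xs k m})"

definition circular_system :: "'a set \<Rightarrow> 'a list \<Rightarrow> 'a set set set \<Rightarrow> bool" where
  "circular_system X xs S \<longleftrightarrow> (\<forall>s\<in>S. circular_split X xs s)"

text \<open>Twist of xs along the block I = cyc_interval xs k m (2 \<le> m \<le> n-2): the block is reversed.
  The result is given up to rotation (rotated so that the block starts the list).\<close>
definition twist :: "'a list \<Rightarrow> nat \<Rightarrow> nat \<Rightarrow> 'a list" where
  "twist xs k m = rev (take m (rotate k xs)) @ drop m (rotate k xs)"

definition admissible_twist_step :: "'a set \<Rightarrow> 'a set set set \<Rightarrow> 'a list \<Rightarrow> 'a list \<Rightarrow> bool" where
  "admissible_twist_step X S xs ys \<longleftrightarrow>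
     circular_system X xs S \<and>
     (\<exists>k m. 2 \<le> m \<and> m + 2 \<le> length xs \<and>
        (\<forall>s\<in>S. compatible {cyc_interval xs k m, X - cyc_interval xs k m} s) \<and>
        circ_equiv (twist xs k m) ys)"

definition obtainable_by_admissible_twists :: "'a set \<Rightarrow> 'a set set set \<Rightarrow> 'a list \<Rightarrow> 'a list \<Rightarrow> bool" where
  "obtainable_by_admissible_twists X S xs ys \<longleftrightarrow>
     (\<exists>zs. (admissible_twist_step X S)\<^sup>*\<^sup>* xs zs \<and> circ_equiv zs ys)"

end

theory Submission
  imports Defs
begin

text \<open>Read an ordering L for which S is circular as a list starting from a fixed element x0.
  Every split of S then has a side that is a segment of L avoiding x0. If x0 lies outside a
  block I compatible with S, each such segment is disjoint from I, contained in I, or contains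
  I, so reversing I maps it to a segment again. Hence admissible twists, like rotations and
  reflections, preserve circularity.

  Conversely, let S be circular for L and T, both starting with x0. Let j be the first position
  where L deviates from T, and e the last position whose entry lies before L!j in T. Reverse the
  block of L from j to e. A side of a split of S that avoids x0 is a segment of both L and T;
  if it crossed an end of the block, being a segment of T would force it to contain L!e,
  respectively L!j, which it cannot. So the reversal is an admissible twist, unless the block is
  all of L but x0, in which case it is a reflection. It moves to position j either T!j or an
  entry lying earlier in T than L!j, so finitely many such steps turn L into T.\<close>

section \<open>Circular equivalence\<close>

lemma rotate_inverse_exists: "\<exists>k'. rotate k' (rotate k xs) = xs"
proof (cases "xs = []")
  case False
  then have "(length xs - k mod length xs + k) mod length xs = 0"
    by (metis add.commute length_greater_0_conv mod_add_right_eq mod_less_divisor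
        order.strict_implies_order le_add_diff_inverse mod_self)
  then have "rotate (length xs - k mod length xs) (rotate k xs) = xs"
    by (simp only: rotate_rotate rotate_id)
  then show ?thesis ..
qed simp

lemma rev_rotate_exists: "\<exists>k'. rev (rotate k xs) = rotate k' (rev xs)"
  using rotate_rev[of k "rev xs"] by auto

lemma circ_equiv_refl: "circ_equiv xs xs"
  unfolding circ_equiv_def by (metis rotate0 id_apply)

lemma circ_equiv_rotate: "circ_equiv xs (rotate k xs)"
  unfolding circ_equiv_def by blast

lemma circ_equiv_rotate_rev: "circ_equiv xs (rotate k (rev xs))"
  unfolding circ_equiv_def by blast

lemma circ_equiv_sym:
  assumes "circ_equiv xs ys"
  shows "circ_equiv ys xs"
proof -
  obtain k where "ys = rotate k xs \<or> ys = rotate k (rev xs)"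
    using assms unfolding circ_equiv_def by blast
  then show ?thesis
  proof
    assume "ys = rotate k xs"
    then obtain k' where "xs = rotate k' ys"
      using rotate_inverse_exists by metis
    then show ?thesis using circ_equiv_rotate by metis
  next
    assume "ys = rotate k (rev xs)"
    then obtain k' where "rev ys = rotate k' xs"
      using rev_rotate_exists[of k "rev xs"] by auto
    then obtain k'' where "xs = rotate k'' (rev ys)"
      using rotate_inverse_exists by metis
    then show ?thesis using circ_equiv_rotate_rev by metis
  qed
qed

lemma circ_equiv_trans:
  assumes "circ_equiv xs ys" "circ_equiv ys zs"
  shows "circ_equiv xs zs"
proof -
  obtain a where a: "ys = rotate a xs \<or> ys = rotate a (rev xs)"
    using assms(1) unfolding circ_equiv_def by blast
  obtain b where b: "zs = rotate b ys \<or> zs = rotate b (rev ys)"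
    using assms(2) unfolding circ_equiv_def by blast
  from a b show ?thesis
  proof (elim disjE)
    assume "ys = rotate a xs" "zs = rotate b (rev ys)"
    moreover obtain a' where "rev (rotate a xs) = rotate a' (rev xs)"
      using rev_rotate_exists by blast
    ultimately show ?thesis by (simp add: rotate_rotate circ_equiv_rotate_rev)
  next
    assume "ys = rotate a (rev xs)" "zs = rotate b (rev ys)"
    moreover obtain a' where "rev (rotate a (rev xs)) = rotate a' xs"
      using rev_rotate_exists[of a "rev xs"] by auto
    ultimately show ?thesis by (simp add: rotate_rotate circ_equiv_rotate)
  qed (simp_all add: rotate_rotate circ_equiv_rotate circ_equiv_rotate_rev)
qed

lemma circ_equiv_length: "circ_equiv xs ys \<Longrightarrow> length ys = length xs"
  unfolding circ_equiv_def by auto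

lemma circ_equiv_set: "circ_equiv xs ys \<Longrightarrow> set ys = set xs"
  unfolding circ_equiv_def by auto

lemma circ_equiv_distinct: "circ_equiv xs ys \<Longrightarrow> distinct ys = distinct xs"
  unfolding circ_equiv_def by auto

lemma cyc_interval_rotate: "cyc_interval (rotate r xs) k m = cyc_interval xs (k + r) m"
  unfolding cyc_interval_def by (simp add: rotate_rotate)

lemma set_drop_eq_cyc_interval: "set (drop d xs) = cyc_interval xs d (length xs - d)"
proof (cases "d < length xs")
  case True
  then have "rotate d xs = drop d xs @ take d xs" by (simp add: rotate_drop_take)
  then show ?thesis unfolding cyc_interval_def by simp
qed (simp add: cyc_interval_def)

lemma cyc_interval_rev: "\<exists>k' m'. cyc_interval (rev xs) k m = cyc_interval xs k' m'"
proof -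
  define q where "q = length xs - k mod length xs"
  have "cyc_interval (rev xs) k m = set (drop (length xs - m) (rotate q xs))"
    unfolding cyc_interval_def q_def rotate_rev by (simp add: take_rev)
  also have "\<dots> = cyc_interval xs (length xs - m + q) (length xs - (length xs - m))"
    by (simp add: set_drop_eq_cyc_interval cyc_interval_rotate)
  finally show ?thesis by blast
qed

lemma cyc_interval_circ_equiv:
  "circ_equiv xs ys \<Longrightarrow> \<exists>k' m'. cyc_interval ys k m = cyc_interval xs k' m'"
  unfolding circ_equiv_def by (metis cyc_interval_rotate cyc_interval_rev)

lemma circular_system_circ_equiv:
  assumes "circ_equiv xs ys" "circular_system X xs S"
  shows "circular_system X ys S"
  using assms cyc_interval_circ_equiv[OF circ_equiv_sym[OF assms(1)]]
  unfolding circular_system_def circular_split_def by metis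

section \<open>Segments of a list and circular splits\<close>

definition seg :: "'a list \<Rightarrow> nat \<Rightarrow> nat \<Rightarrow> 'a set" where
  "seg L lo hi = set (take (hi - lo) (drop lo L))"

lemma seg_conv_nth: "seg L lo hi = {L ! i | i. lo \<le> i \<and> i < hi \<and> i < length L}"
proof -
  have "x \<in> seg L lo hi \<longleftrightarrow> (\<exists>i. x = L ! i \<and> lo \<le> i \<and> i < hi \<and> i < length L)" for x
  proof
    assume "x \<in> seg L lo hi"
    then obtain p where "p < min (hi - lo) (length L - lo)" "x = L ! (lo + p)"
      unfolding seg_def by (auto simp: in_set_conv_nth)
    then show "\<exists>i. x = L ! i \<and> lo \<le> i \<and> i < hi \<and> i < length L"
      by (intro exI[of _ "lo + p"]) auto
  next
    assume "\<exists>i. x = L ! i \<and> lo \<le> i \<and> i < hi \<and> i < length L"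
    then obtain i where "x = L ! i" "lo \<le> i" "i < hi" "i < length L" by blast
    then show "x \<in> seg L lo hi"
      unfolding seg_def in_set_conv_nth by (intro exI[of _ "i - lo"]) auto
  qed
  then show ?thesis by blast
qed

lemma nth_in_seg_iff:
  "distinct L \<Longrightarrow> i < length L \<Longrightarrow> L ! i \<in> seg L lo hi \<longleftrightarrow> lo \<le> i \<and> i < hi"
  unfolding seg_conv_nth by (auto simp: nth_eq_iff_index_eq)

lemma seg_mono: "c \<le> a \<Longrightarrow> b \<le> d \<Longrightarrow> seg L a b \<subseteq> seg L c d"
  unfolding seg_conv_nth by auto

lemma seg_disjoint: "distinct L \<Longrightarrow> b \<le> c \<Longrightarrow> seg L a b \<inter> seg L c d = {}"
  unfolding seg_conv_nth by (auto simp: nth_eq_iff_index_eq)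

lemma seg_empty: "hi \<le> lo \<Longrightarrow> seg L lo hi = {}"
  unfolding seg_def by simp

lemma seg_subset: "seg L lo hi \<subseteq> set L"
  unfolding seg_conv_nth by auto

lemma seg_append_left: "hi \<le> length xs \<Longrightarrow> seg (xs @ ys) lo hi = seg xs lo hi"
  unfolding seg_def by simp

lemma seg_append_right:
  "length xs \<le> lo \<Longrightarrow> seg (xs @ ys) lo hi = seg ys (lo - length xs) (hi - length xs)"
  unfolding seg_def by simp

lemma seg_append_suffix:
  "lo \<le> length xs \<Longrightarrow> seg (xs @ ys) lo (length xs + length ys) = set (drop lo xs) \<union> set ys"
  unfolding seg_def by simp

lemma seg_rev:
  "lo \<le> hi \<Longrightarrow> hi \<le> length xs \<Longrightarrow> seg (rev xs) lo hi = seg xs (length xs - hi) (length xs - lo)"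
  unfolding seg_def by (simp add: drop_rev take_rev drop_take)

lemma diff_seg:
  assumes "distinct L" "lo \<le> hi"
  shows "set L - seg L lo hi = set (take lo L) \<union> set (drop hi L)"
proof -
  have "L = take lo L @ take (hi - lo) (drop lo L) @ drop hi L"
    using assms(2) by (metis append.assoc append_take_drop_id le_add_diff_inverse take_add)
  then have "distinct (take lo L @ take (hi - lo) (drop lo L) @ drop hi L)"
    "set L = set (take lo L) \<union> set (take (hi - lo) (drop lo L)) \<union> set (drop hi L)"
    using assms(1) by (metis, metis Un_assoc set_append)
  then show ?thesis unfolding seg_def by auto
qed

lemma cyc_interval_subset: "cyc_interval L k m \<subseteq> set L"
  unfolding cyc_interval_def by (metis set_rotate set_take_subset)

lemma cyc_interval_side_seg:
  assumes "distinct L" "L \<noteq> []"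
  shows "\<exists>a b. a \<le> b \<and> b \<le> length L \<and>
    seg L a b \<in> {cyc_interval L k m, set L - cyc_interval L k m}"
proof -
  define N k' p where "N = length L" and "k' = k mod N" and "p = min m N"
  have k': "k' < N" using assms(2) unfolding k'_def N_def by simp
  have p: "p \<le> N" unfolding p_def by simp
  have ci: "cyc_interval L k m = set (take p (drop k' L @ take k' L))"
    using k' unfolding cyc_interval_def rotate_drop_take p_def k'_def N_def
    by (simp add: min_def)
  show ?thesis
  proof (cases "k' + p \<le> N")
    case True
    then have "cyc_interval L k m = seg L k' (k' + p)"
      unfolding ci seg_def N_def by simp
    then show ?thesis using True unfolding N_def by (metis insertI1 le_add1)
  next
    case False
    txt \<open>The interval wraps around the end of L, so its complement does not.\<close>
    then have "cyc_interval L k m = set (take (k' + p - N) L) \<union> set (drop k' L)"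
      using p k' unfolding ci N_def by (auto simp: min_def add.commute)
    moreover have "k' + p - N \<le> k'" using p by simp
    ultimately have "set L - seg L (k' + p - N) k' = cyc_interval L k m"
      using diff_seg[OF assms(1)] by simp
    then have "seg L (k' + p - N) k' = set L - cyc_interval L k m"
      using double_diff[OF seg_subset order_refl] by metis
    then show ?thesis using \<open>k' + p - N \<le> k'\<close> k' unfolding N_def
      by (metis insertCI less_imp_le)
  qed
qed

lemma cyc_interval_side_seg_tail:
  assumes "distinct L" "L \<noteq> []"
  shows "\<exists>lo hi. 1 \<le> lo \<and> lo \<le> hi \<and> hi \<le> length L \<and>
    seg L lo hi \<in> {cyc_interval L k m, set L - cyc_interval L k m}"
proof -
  let ?C = "cyc_interval L k m"
  obtain a b where ab: "a \<le> b" "b \<le> length L" "seg L a b \<in> {?C, set L - ?C}"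
    using cyc_interval_side_seg[OF assms] by blast
  have other_side: "set L - seg L a b \<in> {?C, set L - ?C}"
    using ab(3) cyc_interval_subset[of L k m] by (auto simp: double_diff)
  consider "1 \<le> a" | "a = 0" "b = 0" | "a = 0" "1 \<le> b" by linarith
  then show ?thesis
  proof cases
    case 2
    then have "seg L 1 1 \<in> {?C, set L - ?C}" using ab(3) by (simp add: seg_def)
    then show ?thesis using assms(2) by (metis One_nat_def Suc_leI le_refl length_greater_0_conv)
  next
    case 3
    then have "set L - seg L a b = seg L b (length L)"
      using diff_seg[OF assms(1) ab(1)] by (simp add: seg_def)
    then show ?thesis using other_side 3 ab(2) by (metis le_refl)
  qed (use ab in blast)
qed

lemma seg_eq_cyc_interval:
  assumes "lo \<le> hi" "hi \<le> length L"
  shows "seg L lo hi = cyc_interval L lo (hi - lo)"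
proof (cases "lo < length L")
  case True
  then have "rotate lo L = drop lo L @ take lo L" by (simp add: rotate_drop_take)
  then show ?thesis using assms unfolding seg_def cyc_interval_def by simp
qed (use assms in \<open>simp add: seg_def cyc_interval_def\<close>)

lemma is_split_part:
  assumes "is_split X s" "E \<in> s"
  shows "s = {E, X - E}" "E \<subseteq> X"
proof -
  obtain A where "A \<subseteq> X" "s = {A, X - A}"
    using assms(1) unfolding is_split_def by blast
  then show "s = {E, X - E}" "E \<subseteq> X"
    using assms(2) by (auto simp: double_diff)
qed

lemma circular_split_has_seg_part:
  assumes "distinct L" "set L = X" "L \<noteq> []" "circular_split X L s"
  shows "\<exists>E\<in>s. \<exists>lo hi. 1 \<le> lo \<and> lo \<le> hi \<and> hi \<le> length L \<and> E = seg L lo hi"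
proof -
  obtain k m where "s = {cyc_interval L k m, X - cyc_interval L k m}"
    using assms(4) unfolding circular_split_def by blast
  then show ?thesis
    using cyc_interval_side_seg_tail[OF assms(1,3), of k m] assms(2) by blast
qed

lemma circular_split_if_seg_part:
  assumes "is_split X s" "seg L lo hi \<in> s" "lo \<le> hi" "hi \<le> length L"
  shows "circular_split X L s"
  using assms(1) is_split_part(1)[OF assms(1,2)]
  unfolding circular_split_def seg_eq_cyc_interval[OF assms(3,4)] by blast

lemma compatible_splits_iff:
  assumes "A \<subseteq> X" "B \<subseteq> X"
  shows "compatible {A, X - A} {B, X - B} \<longleftrightarrow> A \<inter> B = {} \<or> A \<subseteq> B \<or> B \<subseteq> A \<or> X \<subseteq> A \<union> B"
  using assms unfolding compatible_def by auto

section \<open>Admissible twists preserve circularity\<close>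

lemma seg_append_rev:
  assumes lohi: "lo \<le> hi" "hi \<le> length (L2 @ L1)"
    and "hi \<le> length L2 \<or> length L2 \<le> lo \<or> hi = length (L2 @ L1)"
  shows "\<exists>lo' hi'. lo' \<le> hi' \<and> hi' \<le> length (L2 @ rev L1) \<and>
    seg (L2 @ L1) lo hi = seg (L2 @ rev L1) lo' hi'"
proof -
  define n1 n2 where "n1 = length L1" and "n2 = length L2"
  from assms consider "hi \<le> n2" | "n2 \<le> lo" | "lo \<le> n2" "hi = n2 + n1"
    unfolding n1_def n2_def by force
  then show ?thesis
  proof cases
    case 1
    then have "seg (L2 @ L1) lo hi = seg (L2 @ rev L1) lo hi"
      unfolding n2_def by (simp add: seg_append_left)
    then show ?thesis using lohi by auto
  next
    case 2
    define lo' hi' where "lo' = n1 - (hi - n2)" and "hi' = n1 - (lo - n2)"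
    have bounds: "lo' \<le> hi'" "hi' \<le> n1" "n1 - hi' = lo - n2" "n1 - lo' = hi - n2"
      using lohi 2 unfolding lo'_def hi'_def n1_def n2_def by auto
    have "seg (L2 @ L1) lo hi = seg L1 (lo - n2) (hi - n2)"
      using 2 unfolding n2_def by (rule seg_append_right)
    also have "\<dots> = seg (rev L1) lo' hi'"
      using seg_rev[of lo' hi' L1] bounds unfolding n1_def by simp
    also have "\<dots> = seg (L2 @ rev L1) (n2 + lo') (n2 + hi')"
      using seg_append_right[of L2 "n2 + lo'" "rev L1" "n2 + hi'"] unfolding n2_def by simp
    finally have "seg (L2 @ L1) lo hi = seg (L2 @ rev L1) (n2 + lo') (n2 + hi')" .
    moreover have "n2 + lo' \<le> n2 + hi'" "n2 + hi' \<le> length (L2 @ rev L1)"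
      using bounds unfolding n1_def n2_def by simp_all
    ultimately show ?thesis by blast
  next
    case 3
    then have "seg (L2 @ L1) lo hi = seg (L2 @ rev L1) lo (n2 + n1)"
      using seg_append_suffix[of lo L2 L1] seg_append_suffix[of lo L2 "rev L1"]
      unfolding n1_def n2_def by simp
    moreover have "lo \<le> n2 + n1" "n2 + n1 \<le> length (L2 @ rev L1)"
      using 3 unfolding n1_def n2_def by simp_all
    ultimately show ?thesis by blast
  qed
qed

lemma seg_append_rev_if_nested:
  assumes d: "distinct (L2 @ L1)" and "L1 \<noteq> []" and lohi: "lo \<le> hi" "hi \<le> length (L2 @ L1)"
    and nested: "seg (L2 @ L1) lo hi \<subseteq> set L2 \<or> seg (L2 @ L1) lo hi \<subseteq> set L1
      \<or> set L1 \<subseteq> seg (L2 @ L1) lo hi"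
  shows "\<exists>lo' hi'. lo' \<le> hi' \<and> hi' \<le> length (L2 @ rev L1) \<and>
    seg (L2 @ L1) lo hi = seg (L2 @ rev L1) lo' hi'"
proof -
  let ?E = "seg (L2 @ L1) lo hi"
  define n1 n2 where "n1 = length L1" and "n2 = length L2"
  have "hi \<le> n2 \<or> n2 \<le> lo \<or> hi = n2 + n1"
  proof (cases "lo < hi")
    case True
    have disj: "set L1 \<inter> set L2 = {}" using d by auto
    have in_E: "(L2 @ L1) ! i \<in> ?E \<longleftrightarrow> lo \<le> i \<and> i < hi" if "i < n2 + n1" for i
      using nth_in_seg_iff[OF d, of i lo hi] that unfolding n1_def n2_def by simp
    from nested consider "?E \<subseteq> set L2" | "?E \<subseteq> set L1" | "set L1 \<subseteq> ?E" by blast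
    then show ?thesis
    proof cases
      case 1
      have "(L2 @ L1) ! (hi - 1) \<in> ?E" using in_E True lohi unfolding n1_def n2_def by simp
      moreover have "(L2 @ L1) ! (hi - 1) \<in> set L1" if "\<not> hi \<le> n2"
        using that lohi unfolding n2_def by (auto simp: nth_append)
      ultimately show ?thesis using 1 disj by blast
    next
      case 2
      have "(L2 @ L1) ! lo \<in> ?E" using in_E True lohi unfolding n1_def n2_def by simp
      moreover have "(L2 @ L1) ! lo \<in> set L2" if "\<not> n2 \<le> lo"
        using that unfolding n2_def by (simp add: nth_append)
      ultimately show ?thesis using 2 disj by blast
    next
      case 3
      have "n1 \<noteq> 0" using \<open>L1 \<noteq> []\<close> unfolding n1_def by simp
      then have "(L2 @ L1) ! (n2 + (n1 - 1)) \<in> ?E"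
        using 3 unfolding n1_def n2_def by (auto simp: nth_append)
      moreover have "hi \<le> n2 + n1" using lohi unfolding n1_def n2_def by simp
      ultimately show ?thesis using in_E[of "n2 + (n1 - 1)"] \<open>n1 \<noteq> 0\<close> by auto
    qed
  qed (use lohi in auto)
  then show ?thesis using seg_append_rev[OF lohi] unfolding n1_def n2_def by simp
qed

lemma set_twist: "set (twist xs k m) = set xs"
  unfolding twist_def by (metis append_take_drop_id set_append set_rev set_rotate)

lemma distinct_twist: "distinct (twist xs k m) = distinct xs"
  unfolding twist_def
  by (metis append_take_drop_id distinct_append distinct_rev distinct_rotate set_rev)

lemma circular_split_reverse_block:
  assumes d: "distinct (L2 @ L1)" "set (L2 @ L1) = X" and "L1 \<noteq> []" "L2 \<noteq> []"
    and cs: "circular_split X (L2 @ L1) s"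
    and compat: "compatible {set L1, X - set L1} s"
  shows "circular_split X (L2 @ rev L1) s"
proof -
  have sp: "is_split X s" using cs unfolding circular_split_def by blast
  obtain E lo hi where E: "E \<in> s" "1 \<le> lo" "lo \<le> hi" "hi \<le> length (L2 @ L1)"
    "E = seg (L2 @ L1) lo hi"
    using circular_split_has_seg_part[OF d _ cs] \<open>L2 \<noteq> []\<close> by blast
  have "(L2 @ L1) ! 0 \<notin> E" "(L2 @ L1) ! 0 \<in> set L2"
    using nth_in_seg_iff[OF d(1), of 0 lo hi] E \<open>L2 \<noteq> []\<close> by (auto simp: nth_append)
  then have "\<not> set L2 \<subseteq> E" by blast
  moreover have "compatible {set L1, X - set L1} {E, X - E}"
    using compat is_split_part(1)[OF sp E(1)] by simp
  ultimately have "E \<subseteq> set L2 \<or> E \<subseteq> set L1 \<or> set L1 \<subseteq> E"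
    using compatible_splits_iff[of "set L1" X E] is_split_part(2)[OF sp E(1)] d by auto
  then obtain lo' hi' where "lo' \<le> hi'" "hi' \<le> length (L2 @ rev L1)"
    "E = seg (L2 @ rev L1) lo' hi'"
    using seg_append_rev_if_nested[OF d(1) \<open>L1 \<noteq> []\<close> E(3,4)] E(5) by blast
  then show ?thesis using circular_split_if_seg_part[OF sp] E(1) by blast
qed

lemma circular_system_twist:
  assumes "distinct xs" "set xs = X" "1 \<le> m" "m < length xs"
    and "circular_system X xs S"
    and compat: "\<forall>s\<in>S. compatible {cyc_interval xs k m, X - cyc_interval xs k m} s"
  shows "circular_system X (twist xs k m) S"
proof -
  define L1 L2 where "L1 = take m (rotate k xs)" and "L2 = drop m (rotate k xs)"
  have "L1 \<noteq> []" "L2 \<noteq> []"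
    using assms(3,4) unfolding L1_def L2_def by auto
  have "L2 @ L1 = rotate m (L1 @ L2)"
    using rotate_append[of L1 L2] assms(4) unfolding L1_def by simp
  then have B: "L2 @ L1 = rotate (m + k) xs"
    unfolding L1_def L2_def by (simp add: rotate_rotate)
  then have "distinct (L2 @ L1)" "set (L2 @ L1) = X"
    using assms(1,2) by simp_all
  moreover have "circular_system X (L2 @ L1) S"
    using circular_system_circ_equiv[OF circ_equiv_rotate[of xs "m + k"] assms(5)] B by simp
  moreover have "cyc_interval xs k m = set L1"
    unfolding cyc_interval_def L1_def ..
  ultimately have "circular_system X (L2 @ rev L1) S"
    using circular_split_reverse_block \<open>L1 \<noteq> []\<close> \<open>L2 \<noteq> []\<close> compat
    unfolding circular_system_def by metis
  moreover have "twist xs k m = rotate (length L2) (L2 @ rev L1)"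
    unfolding twist_def L1_def L2_def by (rule rotate_append[symmetric])
  ultimately show ?thesis
    using circular_system_circ_equiv[OF circ_equiv_rotate[of _ "length L2"]] by simp
qed

lemma admissible_twist_step_preserves:
  assumes "admissible_twist_step X S xs ys" "distinct xs" "set xs = X"
  shows "distinct ys" "set ys = X" "circular_system X ys S"
proof -
  obtain k m where "circular_system X xs S" "2 \<le> m" "m + 2 \<le> length xs"
    and compat: "\<forall>s\<in>S. compatible {cyc_interval xs k m, X - cyc_interval xs k m} s"
    and equiv: "circ_equiv (twist xs k m) ys"
    using assms(1) unfolding admissible_twist_step_def by blast
  then have "circular_system X (twist xs k m) S"
    using circular_system_twist[OF assms(2,3)] by simp
  then show "circular_system X ys S"
    using circular_system_circ_equiv[OF equiv] by blast
  show "distinct ys" "set ys = X"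
    using circ_equiv_distinct[OF equiv] circ_equiv_set[OF equiv] assms(2,3)
    by (simp_all add: distinct_twist set_twist)
qed

lemma admissible_twists_preserve:
  assumes "(admissible_twist_step X S)\<^sup>*\<^sup>* xs zs" "distinct xs" "set xs = X"
    and "circular_system X xs S"
  shows "circular_system X zs S"
proof -
  have "distinct zs \<and> set zs = X \<and> circular_system X zs S"
    using assms
  proof (induction rule: rtranclp_induct)
    case (step ys zs)
    then show ?case using admissible_twist_step_preserves[of X S ys zs] by blast
  qed simp
  then show ?thesis by blast
qed

section \<open>Admissible twists up to circular equivalence\<close>

lemma twist_circ_equiv:
  assumes "circ_equiv xs xs'" "m \<le> length xs"
  shows "\<exists>k'. cyc_interval xs k' m = cyc_interval xs' k m \<and> circ_equiv (twist xs' k m) (twist xs k' m)"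
proof -
  obtain r where "xs' = rotate r xs \<or> xs' = rotate r (rev xs)"
    using assms(1) unfolding circ_equiv_def by blast
  then show ?thesis
  proof
    assume "xs' = rotate r xs"
    then have "cyc_interval xs (k + r) m = cyc_interval xs' k m" "twist xs' k m = twist xs (k + r) m"
      unfolding twist_def by (simp_all add: cyc_interval_rotate rotate_rotate)
    then show ?thesis using circ_equiv_refl by metis
  next
    assume xs': "xs' = rotate r (rev xs)"
    define A B where "A = take m (rotate k xs')" and "B = drop m (rotate k xs')"
    obtain q where "rotate k xs' = rev (rotate q xs)"
      using rotate_rev[of "k + r" xs] unfolding xs' rotate_rotate by blast
    then have "rotate q xs = rev B @ rev A"
      unfolding A_def B_def by (metis append_take_drop_id rev_append rev_rev_ident)
    moreover have "rotate (length B + q) xs = rotate (length B) (rotate q xs)"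
      by (simp add: rotate_rotate)
    ultimately have rot: "rotate (length B + q) xs = rev A @ rev B"
      using rotate_append[of "rev B" "rev A"] by simp
    have lA: "length A = m" using assms(2) xs' unfolding A_def by simp
    have "cyc_interval xs (length B + q) m = cyc_interval xs' k m"
      unfolding cyc_interval_def rot using lA by (simp add: A_def)
    moreover have "twist xs (length B + q) m = rotate (length B) (rev (twist xs' k m))"
      unfolding twist_def rot using lA rotate_append[of "rev B" A]
      by (simp add: A_def [symmetric] B_def [symmetric])
    ultimately show ?thesis using circ_equiv_rotate_rev by metis
  qed
qed

lemma admissible_twist_step_circ_equiv_left:
  assumes "circ_equiv xs xs'" "admissible_twist_step X S xs' ys" "circular_system X xs S"
  shows "admissible_twist_step X S xs ys"
proof -
  obtain k m where m: "2 \<le> m" "m + 2 \<le> length xs'"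
    and compat: "\<forall>s\<in>S. compatible {cyc_interval xs' k m, X - cyc_interval xs' k m} s"
    and equiv: "circ_equiv (twist xs' k m) ys"
    using assms(2) unfolding admissible_twist_step_def by blast
  have "length xs' = length xs" using circ_equiv_length[OF assms(1)] .
  moreover obtain k' where "cyc_interval xs k' m = cyc_interval xs' k m"
    "circ_equiv (twist xs' k m) (twist xs k' m)"
    using twist_circ_equiv[OF assms(1), of m k] m calculation by auto
  ultimately show ?thesis
    unfolding admissible_twist_step_def
    using assms(3) m compat circ_equiv_trans[OF circ_equiv_sym equiv] by metis
qed

lemma obtainable_by_admissible_twists_circ_equiv_left:
  assumes "circ_equiv xs xs'" "circular_system X xs S"
    and "obtainable_by_admissible_twists X S xs' ys"
  shows "obtainable_by_admissible_twists X S xs ys"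
proof -
  obtain zs where chain: "(admissible_twist_step X S)\<^sup>*\<^sup>* xs' zs" and "circ_equiv zs ys"
    using assms(3) unfolding obtainable_by_admissible_twists_def by blast
  from chain show ?thesis
  proof (cases rule: converse_rtranclpE)
    case base
    then show ?thesis unfolding obtainable_by_admissible_twists_def
      using circ_equiv_trans[OF assms(1)] \<open>circ_equiv zs ys\<close> by blast
  next
    case (step y)
    then have "(admissible_twist_step X S)\<^sup>*\<^sup>* xs zs"
      using admissible_twist_step_circ_equiv_left[OF assms(1) _ assms(2)]
      by (metis converse_rtranclp_into_rtranclp)
    then show ?thesis unfolding obtainable_by_admissible_twists_def
      using \<open>circ_equiv zs ys\<close> by blast
  qed
qed

section \<open>Twisting one ordering into another\<close>

definition pos :: "'a list \<Rightarrow> 'a \<Rightarrow> nat" where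
  "pos T x = the_inv_into {..<length T} ((!) T) x"

lemma pos_nth: "distinct T \<Longrightarrow> i < length T \<Longrightarrow> pos T (T ! i) = i"
  unfolding pos_def by (simp add: inj_on_nth the_inv_into_f_f)

lemma
  assumes "distinct T" "x \<in> set T"
  shows pos_less_length: "pos T x < length T" and nth_pos: "T ! pos T x = x"
proof -
  obtain i where "i < length T" "x = T ! i"
    using assms(2) by (auto simp: in_set_conv_nth)
  then show "pos T x < length T" "T ! pos T x = x"
    using pos_nth[OF assms(1)] by simp_all
qed

definition first_mismatch :: "'a list \<Rightarrow> 'a list \<Rightarrow> nat" where
  "first_mismatch T L = (LEAST i. i = length T \<or> L ! i \<noteq> T ! i)"

lemma first_mismatch_le: "first_mismatch T L \<le> length T"
  unfolding first_mismatch_def by (rule Least_le) simp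

lemma nth_less_first_mismatch: "i < first_mismatch T L \<Longrightarrow> L ! i = T ! i"
  unfolding first_mismatch_def using not_less_Least by blast

lemma nth_first_mismatch:
  "first_mismatch T L < length T \<Longrightarrow> L ! first_mismatch T L \<noteq> T ! first_mismatch T L"
  unfolding first_mismatch_def by (metis (mono_tags, lifting) LeastI less_irrefl)

lemma first_mismatch_geI:
  assumes "j \<le> length T" "\<And>i. i < j \<Longrightarrow> L ! i = T ! i"
  shows "j \<le> first_mismatch T L"
proof (rule ccontr)
  assume "\<not> j \<le> first_mismatch T L"
  then show False
    using nth_first_mismatch[of T L] assms by simp
qed

lemma first_mismatch_eqI:
  assumes "j < length T" "\<And>i. i < j \<Longrightarrow> L ! i = T ! i" "L ! j \<noteq> T ! j"
  shows "first_mismatch T L = j"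
  using first_mismatch_geI[of j T L] assms unfolding first_mismatch_def
  by (metis (mono_tags, lifting) Least_le antisym less_imp_le)

lemma pos_ge_common_prefix:
  assumes "distinct T" "distinct L" "set L = set T" "\<And>i. i < j \<Longrightarrow> L ! i = T ! i"
    and "j \<le> i" "i < length L"
  shows "j \<le> pos T (L ! i)"
proof (rule ccontr)
  define p where "p = pos T (L ! i)"
  assume "\<not> j \<le> p"
  moreover have "T ! p = L ! i"
    using nth_pos[OF assms(1)] assms(3,6) unfolding p_def by (metis nth_mem)
  ultimately have "L ! p = L ! i" using assms(4) by simp
  moreover have "p < length L" using \<open>\<not> j \<le> p\<close> assms(5,6) by simp
  ultimately show False
    using nth_eq_iff_index_eq[OF assms(2)] assms(5,6) \<open>\<not> j \<le> p\<close> by fastforce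
qed

lemma twist_block_end_exists:
  assumes dT: "distinct T" and dL: "distinct L" and "set L = set T" "length L = length T"
    and j: "j = first_mismatch T L" "j < length T"
  obtains e where "j < e" "e < length T" "pos T (L ! e) < pos T (L ! j)"
    "\<And>i. e < i \<Longrightarrow> i < length T \<Longrightarrow> pos T (L ! j) \<le> pos T (L ! i)"
proof -
  define N where "N = length T"
  define a where "a = pos T (L ! j)"
  have agree: "L ! i = T ! i" if "i < j" for i
    using nth_less_first_mismatch that j(1) by blast
  have mismatch: "L ! j \<noteq> T ! j"
    using nth_first_mismatch j by blast
  have "j \<le> a"
    using pos_ge_common_prefix[OF dT dL assms(3) agree] j assms(4) unfolding a_def by simp
  moreover have "a \<noteq> j"
    using nth_pos[OF dT] mismatch assms(3,4) j(2) unfolding a_def by (metis nth_mem)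
  ultimately have "j < a" by simp
  obtain c where c: "c < N" "L ! c = T ! j"
    using j(2) assms(3,4) unfolding N_def by (metis in_set_conv_nth nth_mem)
  have "c \<noteq> j" using c mismatch by auto
  moreover have "\<not> c < j"
    using agree c nth_eq_iff_index_eq[OF dT] j(2) unfolding N_def by fastforce
  ultimately have "j < c" by simp
  define C where "C = {i. j < i \<and> i < N \<and> pos T (L ! i) < a}"
  have "c \<in> C"
    using \<open>j < c\<close> c \<open>j < a\<close> pos_nth[OF dT j(2)] unfolding C_def by simp
  moreover have "finite C"
    by (rule finite_subset[of _ "{..<N}"]) (auto simp: C_def)
  ultimately have "Max C \<in> C" and Max: "\<And>i. i \<in> C \<Longrightarrow> i \<le> Max C"
    by (auto intro: Max_in)
  moreover have "a \<le> pos T (L ! i)" if "Max C < i" "i < N" for i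
    using Max[of i] that \<open>Max C \<in> C\<close> unfolding C_def by fastforce
  ultimately show thesis
    using that[of "Max C"] unfolding C_def N_def a_def by blast
qed

context
  fixes T L :: "'a list" and j e :: nat
  assumes distinct_T: "distinct T" and distinct_L: "distinct L"
    and set_L: "set L = set T" and length_L: "length L = length T"
    and prefix: "\<And>i. i < j \<Longrightarrow> L ! i = T ! i"
    and block: "j < e" "e < length T" "pos T (L ! e) < pos T (L ! j)"
    and beyond_block: "\<And>i. e < i \<Longrightarrow> i < length T \<Longrightarrow> pos T (L ! j) \<le> pos T (L ! i)"
begin

lemma nth_L_in_seg_T_iff:
  "i < length T \<Longrightarrow> L ! i \<in> seg T lo hi \<longleftrightarrow> lo \<le> pos T (L ! i) \<and> pos T (L ! i) < hi"
  using nth_in_seg_iff[OF distinct_T, of "pos T (L ! i)" lo hi]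
    pos_less_length[OF distinct_T] nth_pos[OF distinct_T] set_L length_L
  by (metis nth_mem)

lemma common_seg_through_block_start:
  assumes E: "seg L lo' hi' = seg T lo hi" and "lo' < j" "j < hi'"
  shows "e < hi'"
proof -
  have j: "j < length T" using block by simp
  have "L ! (j - 1) \<in> seg L lo' hi'" "L ! j \<in> seg L lo' hi'"
    using nth_in_seg_iff[OF distinct_L] assms(2,3) j length_L by auto
  moreover have "pos T (L ! (j - 1)) = j - 1"
    using prefix[of "j - 1"] pos_nth[OF distinct_T] assms(2) j by simp
  ultimately have "lo \<le> j - 1" "pos T (L ! j) < hi"
    using nth_L_in_seg_T_iff[of "j - 1"] nth_L_in_seg_T_iff[OF j] E j by auto
  moreover have "j \<le> pos T (L ! e)"
    using pos_ge_common_prefix[OF distinct_T distinct_L set_L prefix] block length_L by simp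
  ultimately have "L ! e \<in> seg L lo' hi'"
    using nth_L_in_seg_T_iff[of e] E block by simp
  then show ?thesis using nth_in_seg_iff[OF distinct_L] block length_L by simp
qed

lemma common_seg_through_block_end:
  assumes E: "seg L lo' hi' = seg T lo hi" "hi' \<le> length T" and "lo' \<le> e" "Suc e < hi'"
  shows "lo' \<le> j"
proof -
  have j: "j < length T" and e: "Suc e < length T" using block assms(2,4) by simp_all
  have "L ! e \<in> seg L lo' hi'" "L ! Suc e \<in> seg L lo' hi'"
    using nth_in_seg_iff[OF distinct_L] assms(3,4) e length_L by auto
  then have "lo \<le> pos T (L ! e)" "pos T (L ! Suc e) < hi"
    using nth_L_in_seg_T_iff[of e] nth_L_in_seg_T_iff[OF e] E(1) e by auto
  moreover have "pos T (L ! j) \<le> pos T (L ! Suc e)"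
    using beyond_block[of "Suc e"] e by simp
  ultimately have "L ! j \<in> seg L lo' hi'"
    using nth_L_in_seg_T_iff[OF j] E(1) block by simp
  then show ?thesis using nth_in_seg_iff[OF distinct_L] j length_L by simp
qed

lemma twist_block_nested_or_disjoint:
  assumes E: "seg L lo' hi' = seg T lo hi" "hi' \<le> length T"
  shows "seg L j (Suc e) \<inter> seg L lo' hi' = {} \<or> seg L j (Suc e) \<subseteq> seg L lo' hi'
    \<or> seg L lo' hi' \<subseteq> seg L j (Suc e)"
proof -
  consider "hi' \<le> j \<or> Suc e \<le> lo' \<or> hi' \<le> lo'" | "lo' \<le> j" "Suc e \<le> hi'"
    | "j \<le> lo'" "hi' \<le> Suc e" | "lo' < j" "j < hi'" "hi' \<le> e"
    | "j < lo'" "lo' \<le> e" "Suc e < hi'"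
    by linarith
  then show ?thesis
  proof cases
    case 1
    then show ?thesis
      using seg_disjoint[OF distinct_L, of hi' j lo' "Suc e"] seg_empty[of hi' lo' L]
        seg_disjoint[OF distinct_L, of "Suc e" lo' j hi'] by blast
  next
    case 4
    then show ?thesis using common_seg_through_block_start[OF E(1)] by simp
  next
    case 5
    then show ?thesis using common_seg_through_block_end[OF E(1,2)] by simp
  qed (simp_all add: seg_mono)
qed

lemma twist_block_compatible:
  assumes T: "set T = X" "circular_system X T S"
    and L: "L ! 0 = T ! 0" "circular_system X L S" and "s \<in> S"
  shows "compatible {seg L j (Suc e), X - seg L j (Suc e)} s"
proof -
  have "T \<noteq> []" "L \<noteq> []" using block length_L by auto
  have sp: "is_split X s"
    using T(2) \<open>s \<in> S\<close> unfolding circular_system_def circular_split_def by blast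
  obtain E lo' hi' where E: "E \<in> s" "1 \<le> lo'" "hi' \<le> length T" "E = seg L lo' hi'"
    using circular_split_has_seg_part[OF distinct_L _ \<open>L \<noteq> []\<close>] set_L T(1) L(2) \<open>s \<in> S\<close>
      length_L unfolding circular_system_def by metis
  obtain E' lo hi where E': "E' \<in> s" "1 \<le> lo" "hi \<le> length T" "E' = seg T lo hi"
    using circular_split_has_seg_part[OF distinct_T T(1) \<open>T \<noteq> []\<close>] T(2) \<open>s \<in> S\<close>
    unfolding circular_system_def by metis
  txt \<open>Both parts avoid the common first element, so they coincide.\<close>
  have "T ! 0 \<notin> E" "T ! 0 \<notin> E'" "T ! 0 \<in> X"
    using nth_in_seg_iff[OF distinct_L, of 0 lo' hi'] nth_in_seg_iff[OF distinct_T, of 0 lo hi]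
      E E' L(1) T(1) \<open>T \<noteq> []\<close> \<open>L \<noteq> []\<close> by auto
  then have "E' = E" using is_split_part(1)[OF sp E(1)] E'(1) by auto
  then have "seg L j (Suc e) \<inter> E = {} \<or> seg L j (Suc e) \<subseteq> E \<or> E \<subseteq> seg L j (Suc e)"
    using twist_block_nested_or_disjoint[of lo' hi' lo hi] E E' by simp
  moreover have "seg L j (Suc e) \<subseteq> X" "E \<subseteq> X"
    using seg_subset[of L j "Suc e"] set_L T(1) is_split_part(2)[OF sp E(1)] by auto
  ultimately show ?thesis
    using compatible_splits_iff is_split_part(1)[OF sp E(1)] by metis
qed

end

definition rev_seg :: "'a list \<Rightarrow> nat \<Rightarrow> nat \<Rightarrow> 'a list" where
  "rev_seg L lo hi = take lo L @ rev (take (hi - lo) (drop lo L)) @ drop hi L"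

lemma rev_seg_circ_equiv_twist:
  assumes "lo \<le> hi" "hi \<le> length L" "lo < length L"
  shows "circ_equiv (twist L lo (hi - lo)) (rev_seg L lo hi)"
proof -
  have "rotate lo L = drop lo L @ take lo L"
    using assms(3) by (simp add: rotate_drop_take)
  then have "twist L lo (hi - lo) = rotate (length (take lo L)) (rev_seg L lo hi)"
    unfolding twist_def rev_seg_def rotate_append[of "take lo L"]
    using assms by (simp add: drop_take)
  then show ?thesis using circ_equiv_sym circ_equiv_rotate by metis
qed

lemma nth_rev_seg:
  assumes "lo \<le> hi" "hi \<le> length L" "i < length L"
  shows "rev_seg L lo hi ! i = L ! (if lo \<le> i \<and> i < hi then lo + hi - 1 - i else i)"
  using assms unfolding rev_seg_def
  by (auto simp: nth_append rev_nth min_def intro!: arg_cong[where f = "(!) L"])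

lemma rev_seg_tail_circ_equiv: "circ_equiv L (rev_seg L 1 (length L))"
proof (cases L)
  case (Cons x xs)
  then have "rev_seg L 1 (length L) = rotate (length xs) (rev xs @ [x])"
    unfolding rev_seg_def using rotate_append[of "rev xs" "[x]"] by simp
  then show ?thesis using Cons circ_equiv_rotate_rev by (metis rev.simps(2))
qed (simp add: rev_seg_def circ_equiv_refl)

definition closer_to :: "'a list \<Rightarrow> ('a list \<times> 'a list) set" where
  "closer_to T = measures [\<lambda>L. length T - first_mismatch T L, \<lambda>L. pos T (L ! first_mismatch T L)]"

lemma wf_closer_to: "wf (closer_to T)"
  unfolding closer_to_def by simp

lemma rev_seg_closer_to:
  assumes j: "j = first_mismatch T L" "j < e" "e < length T" "length L = length T"
    and "pos T (L ! e) < pos T (L ! j)"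
  shows "(rev_seg L j (Suc e), L) \<in> closer_to T"
proof -
  define L' where "L' = rev_seg L j (Suc e)"
  have L': "L' ! i = L ! (if j \<le> i \<and> i \<le> e then j + e - i else i)" if "i < length T" for i
    using nth_rev_seg[of j "Suc e" L i] j that unfolding L'_def by auto
  have prefix: "L' ! i = T ! i" if "i < j" for i
    using L'[of i] nth_less_first_mismatch[of i T L] that j by simp
  show ?thesis
  proof (cases "L ! e = T ! j")
    case True
    then have "Suc j \<le> first_mismatch T L'"
      using first_mismatch_geI[of "Suc j" T L'] prefix L'[of j] j less_Suc_eq by auto
    then show ?thesis using first_mismatch_le[of T L'] j
      unfolding closer_to_def L'_def by auto
  next
    case False
    then have "first_mismatch T L' = j"
      using first_mismatch_eqI[of j T L'] prefix L'[of j] j by auto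
    then show ?thesis using L'[of j] j assms(5) unfolding closer_to_def L'_def by simp
  qed
qed

lemma exists_twist_closer_to:
  assumes T: "distinct T" "set T = X" "circular_system X T S"
    and L: "distinct L" "set L = X" "L ! 0 = T ! 0" "circular_system X L S"
    and mismatch: "first_mismatch T L < length T"
  obtains L' where "admissible_twist_step X S L L' \<or> circ_equiv L L'"
    "distinct L'" "set L' = X" "L' ! 0 = T ! 0" "circular_system X L' S" "(L', L) \<in> closer_to T"
proof -
  define j where "j = first_mismatch T L"
  have lL: "length L = length T" using T L by (metis distinct_card)
  have "L ! j \<noteq> T ! j" using nth_first_mismatch mismatch unfolding j_def by blast
  then have "1 \<le> j" using L(3) by (cases j) auto
  have prefix: "L ! i = T ! i" if "i < j" for i
    using nth_less_first_mismatch that unfolding j_def by blast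
  obtain e where e: "j < e" "e < length T" "pos T (L ! e) < pos T (L ! j)"
    and beyond: "\<And>i. e < i \<Longrightarrow> i < length T \<Longrightarrow> pos T (L ! j) \<le> pos T (L ! i)"
    using twist_block_end_exists[OF T(1) L(1) _ lL j_def] mismatch T(2) L(2) j_def by metis
  define m L' where "m = Suc e - j" and "L' = rev_seg L j (Suc e)"
  have m: "2 \<le> m" "m < length L" using e \<open>1 \<le> j\<close> lL unfolding m_def by auto
  have "cyc_interval L j m = seg L j (Suc e)"
    using seg_eq_cyc_interval[of j "Suc e" L] e lL unfolding m_def by simp
  then have compat: "\<forall>s\<in>S. compatible {cyc_interval L j m, X - cyc_interval L j m} s"
    using twist_block_compatible[OF T(1) L(1) _ lL prefix e beyond T(2,3) L(3,4)] T(2) L(2)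
    by simp
  have equiv: "circ_equiv (twist L j m) L'"
    using rev_seg_circ_equiv_twist[of j "Suc e" L] e lL unfolding m_def L'_def by simp
  have "circular_system X L' S"
    using circular_system_twist[OF L(1,2) _ _ L(4) compat] m
      circular_system_circ_equiv[OF equiv] by simp
  moreover have "distinct L'" "set L' = X"
    using circ_equiv_distinct[OF equiv] circ_equiv_set[OF equiv] L(1,2)
    by (simp_all add: distinct_twist set_twist)
  moreover have "admissible_twist_step X S L L' \<or> circ_equiv L L'"
  proof (cases "m + 2 \<le> length L")
    case True
    then show ?thesis
      unfolding admissible_twist_step_def using L(4) m compat equiv by blast
  next
    case False
    then have "j = 1" "Suc e = length L" using m e lL \<open>1 \<le> j\<close> unfolding m_def by auto
    then have "circ_equiv L L'"
      using rev_seg_tail_circ_equiv[of L] unfolding L'_def by simp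
    then show ?thesis ..
  qed
  moreover have "L' ! 0 = T ! 0"
    using nth_rev_seg[of j "Suc e" L 0] prefix[of 0] \<open>1 \<le> j\<close> e lL unfolding L'_def
    by (cases T) auto
  moreover have "(L', L) \<in> closer_to T"
    using rev_seg_closer_to[OF j_def e(1,2) lL e(3)] unfolding L'_def .
  ultimately show thesis using that by blast
qed

lemma obtainable_by_admissible_twists_target:
  assumes T: "distinct T" "set T = X" "circular_system X T S"
  shows "distinct L \<Longrightarrow> set L = X \<Longrightarrow> L ! 0 = T ! 0 \<Longrightarrow> circular_system X L S \<Longrightarrow>
    obtainable_by_admissible_twists X S L T"
proof (induction L rule: wf_induct_rule[OF wf_closer_to[of T]])
  case (1 L)
  show ?case
  proof (cases "first_mismatch T L < length T")
    case True
    obtain L' where L': "admissible_twist_step X S L L' \<or> circ_equiv L L'"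
      "distinct L'" "set L' = X" "L' ! 0 = T ! 0" "circular_system X L' S"
      "(L', L) \<in> closer_to T"
      using exists_twist_closer_to[OF T 1(2-5) True] by blast
    have "obtainable_by_admissible_twists X S L' T"
      using 1(1)[OF L'(6) L'(2-5)] .
    then show ?thesis using L'(1)
      using obtainable_by_admissible_twists_circ_equiv_left[OF _ 1(5)]
      unfolding obtainable_by_admissible_twists_def
      by (metis converse_rtranclp_into_rtranclp)
  next
    case False
    then have "L = T"
      using nth_less_first_mismatch[of _ T L] first_mismatch_le[of T L] 1(2,3) T(1,2)
      by (metis distinct_card le_antisym not_less nth_equalityI)
    then show ?thesis
      unfolding obtainable_by_admissible_twists_def using circ_equiv_refl by blast
  qed
qed

theorem theorem3:
  fixes X :: "'a set" and S :: "'a set set set" and \<pi>1 \<pi>2 :: "'a list"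
  assumes "finite X" and "card X \<ge> 4"
    and "split_system X S"
    and "circ_ordering X \<pi>1" and "circ_ordering X \<pi>2"
    and "circular_system X \<pi>1 S"
  shows "circular_system X \<pi>2 S \<longleftrightarrow> obtainable_by_admissible_twists X S \<pi>1 \<pi>2"
proof
  assume "obtainable_by_admissible_twists X S \<pi>1 \<pi>2"
  then obtain zs where "(admissible_twist_step X S)\<^sup>*\<^sup>* \<pi>1 zs" "circ_equiv zs \<pi>2"
    unfolding obtainable_by_admissible_twists_def by blast
  then show "circular_system X \<pi>2 S"
    using admissible_twists_preserve circular_system_circ_equiv assms(4,6)
    unfolding circ_ordering_def by blast
next
  assume "circular_system X \<pi>2 S"
  have "\<pi>2 \<noteq> []" "set \<pi>1 = set \<pi>2"
    using assms(2,4,5) unfolding circ_ordering_def by auto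
  then obtain i where "i < length \<pi>1" "\<pi>1 ! i = \<pi>2 ! 0"
    by (metis hd_conv_nth hd_in_set in_set_conv_nth)
  then have "rotate i \<pi>1 ! 0 = \<pi>2 ! 0"
    using nth_rotate[of 0 \<pi>1 i] by (cases \<pi>1) auto
  then have "obtainable_by_admissible_twists X S (rotate i \<pi>1) \<pi>2"
    using obtainable_by_admissible_twists_target[of \<pi>2 X S "rotate i \<pi>1"]
      \<open>circular_system X \<pi>2 S\<close>
      circular_system_circ_equiv[OF circ_equiv_rotate assms(6)] assms(4,5)
    unfolding circ_ordering_def by simp
  then show "obtainable_by_admissible_twists X S \<pi>1 \<pi>2"
    by (rule obtainable_by_admissible_twists_circ_equiv_left[OF circ_equiv_rotate assms(6)])
qed

end
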